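(* Let $G=(V,E)$ be an infinite, connected, locally finite, vertex-transitive graph and $\Gamma$ a group of automorphisms of $G$ acting transitively on $V$. Suppose $h:V\to\mathbb{R}$ is a random function with $\Gamma$-invariant law and $\Delta h\equiv0$. If $h$ can be written as $h=v-u$ with random functions $u\ge0$ and $v$ satisfying $\sup_{x\in V}\mathbb{E}\,v(x)^+<\infty$, then $h$ is almost surely constant.
   Context: $\Delta u(x)=\sum_{y\sim x}(u(y)-u(x))$. A random function $h$ has $\Gamma$-invariant law if $(h(\alpha^{-1}x))_{x\in V}$ has the same law as $h$ for every $\alpha\in\Gamma$. $a^+=\max(a,0)$. *)

theory Defs
  imports "HOL-Probability.Probability"
begin

definition simple_graph :: "('v \<Rightarrow> 'v \<Rightarrow> bool) \<Rightarrow> bool" where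
  "simple_graph E \<longleftrightarrow> (\<forall>x y. E x y \<longrightarrow> E y x) \<and> (\<forall>x. \<not> E x x)"

definition locally_finite :: "('v \<Rightarrow> 'v \<Rightarrow> bool) \<Rightarrow> bool" where
  "locally_finite E \<longleftrightarrow> (\<forall>x. finite {y. E x y})"

definition connected_graph :: "('v \<Rightarrow> 'v \<Rightarrow> bool) \<Rightarrow> bool" where
  "connected_graph E \<longleftrightarrow> (\<forall>x y. (x, y) \<in> {(a, b). E a b}\<^sup>*)"

definition graph_aut :: "('v \<Rightarrow> 'v \<Rightarrow> bool) \<Rightarrow> ('v \<Rightarrow> 'v) \<Rightarrow> bool" where
  "graph_aut E \<alpha> \<longleftrightarrow> bij \<alpha> \<and> (\<forall>x y. E x y \<longleftrightarrow> E (\<alpha> x) (\<alpha> y))"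

definition vertex_transitive :: "('v \<Rightarrow> 'v \<Rightarrow> bool) \<Rightarrow> bool" where
  "vertex_transitive E \<longleftrightarrow> (\<forall>x y. \<exists>\<alpha>. graph_aut E \<alpha> \<and> \<alpha> x = y)"

definition aut_group :: "('v \<Rightarrow> 'v \<Rightarrow> bool) \<Rightarrow> ('v \<Rightarrow> 'v) set \<Rightarrow> bool" where
  "aut_group E \<Gamma> \<longleftrightarrow> (\<forall>\<alpha>\<in>\<Gamma>. graph_aut E \<alpha>) \<and> id \<in> \<Gamma> \<and>
     (\<forall>\<alpha>\<in>\<Gamma>. \<forall>\<beta>\<in>\<Gamma>. \<alpha> \<circ> \<beta> \<in> \<Gamma>) \<and> (\<forall>\<alpha>\<in>\<Gamma>. inv \<alpha> \<in> \<Gamma>)"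

definition transitive_on_vertices :: "('v \<Rightarrow> 'v) set \<Rightarrow> bool" where
  "transitive_on_vertices \<Gamma> \<longleftrightarrow> (\<forall>x y. \<exists>\<alpha>\<in>\<Gamma>. \<alpha> x = y)"

definition graph_laplacian :: "('v \<Rightarrow> 'v \<Rightarrow> bool) \<Rightarrow> ('v \<Rightarrow> real) \<Rightarrow> 'v \<Rightarrow> real" where
  "graph_laplacian E u x = (\<Sum>y\<in>{y. E x y}. u y - u x)"

definition random_function :: "'w measure \<Rightarrow> ('w \<Rightarrow> 'v \<Rightarrow> real) \<Rightarrow> bool" where
  "random_function M h \<longleftrightarrow> (\<forall>x. (\<lambda>\<omega>. h \<omega> x) \<in> borel_measurable M)"

definition law :: "'w measure \<Rightarrow> ('w \<Rightarrow> 'v \<Rightarrow> real) \<Rightarrow> ('v \<Rightarrow> real) measure" where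
  "law M h = distr M (PiM UNIV (\<lambda>_. borel)) h"

definition invariant_law :: "'w measure \<Rightarrow> ('v \<Rightarrow> 'v) set \<Rightarrow> ('w \<Rightarrow> 'v \<Rightarrow> real) \<Rightarrow> bool" where
  "invariant_law M \<Gamma> h \<longleftrightarrow>
     (\<forall>\<alpha>\<in>\<Gamma>. law M (\<lambda>\<omega> x. h \<omega> (inv \<alpha> x)) = law M h)"

end

theory Submission
  imports Defs
begin

text \<open>Since h is harmonic, for every level c the positive part of h - c is subharmonic.
  Invariance of the law makes the expectation of the positive part of h(x) - c independent of x,
  and it is finite because h \<le> v. Integrating the subharmonicity inequality therefore gives
  equality, so almost surely these positive parts are harmonic for all vertices and all rational
  levels c simultaneously (the graph is countable). A function with this property cannot increase
  along an edge, and on a connected graph it is constant.\<close>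

lemma countable_UNIV_if_connected_locally_finite:
  fixes E :: "'v \<Rightarrow> 'v \<Rightarrow> bool"
  assumes "locally_finite E" and "connected_graph E"
  shows "countable (UNIV :: 'v set)"
proof -
  fix x0 :: 'v
  let ?R = "{(a, b). E a b}"
  have finite_spheres: "finite {y. (x0, y) \<in> ?R ^^ n}" for n
  proof (induction n)
    case 0
    then show ?case by simp
  next
    case (Suc n)
    have "{y. (x0, y) \<in> ?R ^^ Suc n} = (\<Union>z\<in>{y. (x0, y) \<in> ?R ^^ n}. {y. E z y})"
      by auto
    then show ?case
      using Suc assms(1) unfolding locally_finite_def by auto
  qed
  have "UNIV = (\<Union>n. {y. (x0, y) \<in> ?R ^^ n})"
    using assms(2) unfolding connected_graph_def by (auto simp: rtrancl_power)
  moreover have "countable (\<Union>n. {y. (x0, y) \<in> ?R ^^ n})"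
    using finite_spheres by (intro countable_UN) (auto intro: countable_finite)
  ultimately show ?thesis
    by simp
qed

lemma constant_if_nonincreasing_along_edges:
  assumes "connected_graph E" and "\<And>x y. E x y \<Longrightarrow> f y \<le> (f x :: 'a :: order)"
  shows "\<exists>c. \<forall>x. f x = c"
proof -
  have "f y \<le> f x" if "(x, y) \<in> {(a, b). E a b}\<^sup>*" for x y
    using that by (induction rule: rtrancl_induct) (auto dest: assms(2) intro: order_trans)
  then have "f x = f y" for x y
    using assms(1) unfolding connected_graph_def by (blast intro: order_antisym)
  then show ?thesis
    by blast
qed

lemma sum_positive_part_ge_if_subharmonic:
  fixes f :: "'v \<Rightarrow> real"
  assumes "finite N" and "0 \<le> (\<Sum>y\<in>N. f y - f x)"
  shows "real (card N) * max (f x - c) 0 \<le> (\<Sum>y\<in>N. max (f y - c) 0)"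
proof (cases "f x \<le> c")
  case True
  then show ?thesis
    by (simp add: sum_nonneg)
next
  case False
  have "real (card N) * max (f x - c) 0 = (\<Sum>y\<in>N. f x - c)"
    using False by simp
  also have "\<dots> \<le> (\<Sum>y\<in>N. f y - f x) + (\<Sum>y\<in>N. f x - c)"
    using assms(2) by simp
  also have "\<dots> = (\<Sum>y\<in>N. f y - c)"
    by (simp only: sum.distrib[symmetric]) simp
  also have "\<dots> \<le> (\<Sum>y\<in>N. max (f y - c) 0)"
    by (rule sum_mono) simp
  finally show ?thesis .
qed

lemma constant_if_positive_parts_harmonic:
  fixes f :: "'v \<Rightarrow> real"
  assumes "connected_graph E" and "locally_finite E"
    and harmonic: "\<And>x c. c \<in> \<rat> \<Longrightarrow>
      (\<Sum>y\<in>{y. E x y}. max (f y - c) 0) = real (card {y. E x y}) * max (f x - c) 0"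
  shows "\<exists>c. \<forall>x. f x = c"
proof (rule constant_if_nonincreasing_along_edges[OF assms(1)])
  fix x y
  assume "E x y"
  show "f y \<le> f x"
  proof (rule ccontr)
    assume "\<not> f y \<le> f x"
    then obtain c where c: "c \<in> \<rat>" "f x < c" "c < f y"
      using Rats_dense_in_real[of "f x" "f y"] by auto
    have "finite {y. E x y}"
      using assms(2) unfolding locally_finite_def by blast
    moreover have "(\<Sum>y\<in>{y. E x y}. max (f y - c) 0) = 0"
      using harmonic[OF c(1), of x] c(2) by simp
    ultimately have "max (f y - c) 0 = 0"
      using \<open>E x y\<close> by (simp add: sum_nonneg_eq_0_iff)
    then show False
      using c(3) by simp
  qed
qed

lemma random_function_measurable_PiM:
  assumes "random_function M h"
  shows "h \<in> measurable M (PiM UNIV (\<lambda>_. borel :: real measure))"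
  using assms unfolding random_function_def
  by (intro measurable_PiM_single') (auto simp: Pi_iff PiE_iff)

lemma nn_integral_invariant_law_vertex_independent:
  fixes g :: "real \<Rightarrow> ennreal"
  assumes "aut_group E \<Gamma>" and "transitive_on_vertices \<Gamma>"
    and "random_function M h" and "invariant_law M \<Gamma> h"
    and [measurable]: "g \<in> borel_measurable borel"
  shows "(\<integral>\<^sup>+ \<omega>. g (h \<omega> x) \<partial>M) = (\<integral>\<^sup>+ \<omega>. g (h \<omega> y) \<partial>M)"
proof -
  let ?P = "PiM UNIV (\<lambda>_. borel :: real measure)"
  obtain \<alpha> where \<alpha>: "\<alpha> \<in> \<Gamma>" "\<alpha> x = y"
    using assms(2) unfolding transitive_on_vertices_def by blast
  then have "inv \<alpha> y = x"
    using assms(1) unfolding aut_group_def graph_aut_def by (metis bij_is_inj inv_f_f)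
  moreover have "random_function M (\<lambda>\<omega> z. h \<omega> (inv \<alpha> z))"
    using assms(3) unfolding random_function_def by blast
  ultimately have "(\<integral>\<^sup>+ \<omega>. g (h \<omega> x) \<partial>M)
      = (\<integral>\<^sup>+ f. g (f y) \<partial>distr M ?P (\<lambda>\<omega> z. h \<omega> (inv \<alpha> z)))"
    by (subst nn_integral_distr) (auto intro: random_function_measurable_PiM)
  also have "\<dots> = (\<integral>\<^sup>+ f. g (f y) \<partial>distr M ?P h)"
    using assms(4) \<alpha>(1) unfolding invariant_law_def law_def by simp
  also have "\<dots> = (\<integral>\<^sup>+ \<omega>. g (h \<omega> y) \<partial>M)"
    using assms(3) by (subst nn_integral_distr) (auto intro: random_function_measurable_PiM)
  finally show ?thesis .
qed

lemma nn_integral_positive_part_finite_if_dominated: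
  fixes h v :: "'w \<Rightarrow> real"
  assumes "prob_space M" and [measurable]: "v \<in> borel_measurable M"
    and "AE \<omega> in M. h \<omega> \<le> v \<omega>"
    and "(\<integral>\<^sup>+ \<omega>. ennreal (max (v \<omega>) 0) \<partial>M) < \<infinity>"
  shows "(\<integral>\<^sup>+ \<omega>. ennreal (max (h \<omega> - c) 0) \<partial>M) \<noteq> \<infinity>"
proof -
  interpret prob_space M by fact
  have "AE \<omega> in M. ennreal (max (h \<omega> - c) 0) \<le> ennreal (max (v \<omega>) 0) + ennreal \<bar>c\<bar>"
    using assms(3)
  proof eventually_elim
    case (elim \<omega>)
    then have "ennreal (max (h \<omega> - c) 0) \<le> ennreal (max (v \<omega>) 0 + \<bar>c\<bar>)"
      by (intro ennreal_leI) linarith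
    then show ?case
      by (simp add: ennreal_plus)
  qed
  then have "(\<integral>\<^sup>+ \<omega>. ennreal (max (h \<omega> - c) 0) \<partial>M)
      \<le> (\<integral>\<^sup>+ \<omega>. ennreal (max (v \<omega>) 0) + ennreal \<bar>c\<bar> \<partial>M)"
    by (rule nn_integral_mono_AE)
  also have "\<dots> = (\<integral>\<^sup>+ \<omega>. ennreal (max (v \<omega>) 0) \<partial>M) + ennreal \<bar>c\<bar>"
    by (subst nn_integral_add) (auto simp: emeasure_space_1)
  also have "\<dots> < \<infinity>"
    using assms(4) by simp
  finally show ?thesis
    by (simp add: less_top)
qed

lemma AE_positive_part_harmonic:
  fixes h :: "'w \<Rightarrow> 'v \<Rightarrow> real"
  assumes "finite N" and "random_function M h"
    and subharmonic: "AE \<omega> in M. 0 \<le> (\<Sum>y\<in>N. h \<omega> y - h \<omega> x)"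
    and same_mean: "\<And>y. (\<integral>\<^sup>+ \<omega>. ennreal (max (h \<omega> y - c) 0) \<partial>M)
      = (\<integral>\<^sup>+ \<omega>. ennreal (max (h \<omega> x - c) 0) \<partial>M)"
    and finite_mean: "(\<integral>\<^sup>+ \<omega>. ennreal (max (h \<omega> x - c) 0) \<partial>M) \<noteq> \<infinity>"
  shows "AE \<omega> in M. (\<Sum>y\<in>N. max (h \<omega> y - c) 0) = real (card N) * max (h \<omega> x - c) 0"
proof -
  have [measurable]: "(\<lambda>\<omega>. h \<omega> y) \<in> borel_measurable M" for y
    using assms(2) unfolding random_function_def by blast
  define A where "A \<omega> = ennreal (\<Sum>y\<in>N. max (h \<omega> y - c) 0)" for \<omega>
  define B where "B \<omega> = ennreal (real (card N) * max (h \<omega> x - c) 0)" for \<omega>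
  have measurable_AB[measurable]: "A \<in> borel_measurable M" "B \<in> borel_measurable M"
    unfolding A_def B_def by measurable
  have B_le_A: "AE \<omega> in M. B \<omega> \<le> A \<omega>"
    using subharmonic unfolding A_def B_def
    by eventually_elim (intro ennreal_leI sum_positive_part_ge_if_subharmonic assms(1))
  have B_mean: "(\<integral>\<^sup>+ \<omega>. B \<omega> \<partial>M) = of_nat (card N) * (\<integral>\<^sup>+ \<omega>. ennreal (max (h \<omega> x - c) 0) \<partial>M)"
    unfolding B_def
    by (simp add: ennreal_mult ennreal_of_nat_eq_real_of_nat nn_integral_cmult)
  have "(\<integral>\<^sup>+ \<omega>. A \<omega> \<partial>M) = (\<Sum>y\<in>N. \<integral>\<^sup>+ \<omega>. ennreal (max (h \<omega> y - c) 0) \<partial>M)"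
    unfolding A_def by (subst sum_ennreal[symmetric]) (auto intro: nn_integral_sum)
  also have "\<dots> = (\<Sum>y\<in>N. \<integral>\<^sup>+ \<omega>. ennreal (max (h \<omega> x - c) 0) \<partial>M)"
    by (rule sum.cong[OF refl same_mean])
  also have "\<dots> = (\<integral>\<^sup>+ \<omega>. B \<omega> \<partial>M)"
    unfolding B_mean by simp
  finally have "\<not> (\<integral>\<^sup>+ \<omega>. B \<omega> \<partial>M) < (\<integral>\<^sup>+ \<omega>. A \<omega> \<partial>M)"
    by simp
  moreover have "(\<integral>\<^sup>+ \<omega>. B \<omega> \<partial>M) \<noteq> \<infinity>"
    using finite_mean unfolding B_mean by (simp add: ennreal_mult_eq_top_iff)
  ultimately have "AE \<omega> in M. A \<omega> \<le> B \<omega>"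
    using nn_integral_less[OF measurable_AB(2,1) _ B_le_A] by blast
  with B_le_A show ?thesis
    unfolding A_def B_def by eventually_elim (simp add: sum_nonneg)
qed

theorem lemma5p4:
  fixes E :: "'v \<Rightarrow> 'v \<Rightarrow> bool"
    and \<Gamma> :: "('v \<Rightarrow> 'v) set"
    and M :: "'w measure"
    and h u v :: "'w \<Rightarrow> 'v \<Rightarrow> real"
  assumes "simple_graph E"
    and "infinite (UNIV :: 'v set)"
    and "connected_graph E"
    and "locally_finite E"
    and "vertex_transitive E"
    and "aut_group E \<Gamma>"
    and "transitive_on_vertices \<Gamma>"
    and "prob_space M"
    and "random_function M h"
    and "invariant_law M \<Gamma> h"
    and "AE \<omega> in M. \<forall>x. graph_laplacian E (h \<omega>) x = 0"
    and "random_function M u"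
    and "random_function M v"
    and "AE \<omega> in M. \<forall>x. u \<omega> x \<ge> 0"
    and "AE \<omega> in M. \<forall>x. h \<omega> x = v \<omega> x - u \<omega> x"
    and "(SUP x. \<integral>\<^sup>+ \<omega>. ennreal (max (v \<omega> x) 0) \<partial>M) < \<infinity>"
  shows "AE \<omega> in M. \<exists>c. \<forall>x. h \<omega> x = c"
proof -
  have same_mean: "(\<integral>\<^sup>+ \<omega>. ennreal (max (h \<omega> y - c) 0) \<partial>M)
      = (\<integral>\<^sup>+ \<omega>. ennreal (max (h \<omega> x - c) 0) \<partial>M)" for x y c
    using assms(6,7,9,10) by (rule nn_integral_invariant_law_vertex_independent) measurable
  have finite_mean: "(\<integral>\<^sup>+ \<omega>. ennreal (max (h \<omega> x - c) 0) \<partial>M) \<noteq> \<infinity>" for x c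
  proof (rule nn_integral_positive_part_finite_if_dominated[OF assms(8)])
    show "(\<lambda>\<omega>. v \<omega> x) \<in> borel_measurable M"
      using assms(13) unfolding random_function_def by blast
    show "AE \<omega> in M. h \<omega> x \<le> v \<omega> x"
      using assms(14,15) by eventually_elim auto
    show "(\<integral>\<^sup>+ \<omega>. ennreal (max (v \<omega> x) 0) \<partial>M) < \<infinity>"
      using assms(16) by (meson SUP_upper UNIV_I le_less_trans)
  qed
  have subharmonic: "AE \<omega> in M. 0 \<le> (\<Sum>y\<in>{y. E x y}. h \<omega> y - h \<omega> x)" for x
    using assms(11) by eventually_elim (simp add: graph_laplacian_def)
  have "AE \<omega> in M. \<forall>x\<in>UNIV. \<forall>c\<in>\<rat>.
      (\<Sum>y\<in>{y. E x y}. max (h \<omega> y - c) 0) = real (card {y. E x y}) * max (h \<omega> x - c) 0"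
  proof (intro AE_ball_countable' countable_rat countable_UNIV_if_connected_locally_finite[OF assms(4,3)])
    fix x c
    have "finite {y. E x y}"
      using assms(4) unfolding locally_finite_def by blast
    then show "AE \<omega> in M. (\<Sum>y\<in>{y. E x y}. max (h \<omega> y - c) 0)
        = real (card {y. E x y}) * max (h \<omega> x - c) 0"
      using assms(9) subharmonic same_mean finite_mean by (rule AE_positive_part_harmonic)
  qed
  then show ?thesis
    by eventually_elim (rule constant_if_positive_parts_harmonic[OF assms(3,4)], simp)
qed

end
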